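(* Let $\mu$ be an offspring distribution, let $X,X_1,X_2,\dots$ be i.i.d. with $\mathbf P(X=i)=\mu_{i+1}$ for $i\ge-1$, and let $\Delta_n=\Delta(\mathrm T_n)$. For $N\ge0$ with $\mu(\{0,1,\dots,N\})>0$, let $X^{<N}_1,X^{<N}_2,\dots$ be i.i.d. with $\mathbf P(X^{<N}_1=i)=\mu_{i+1}/\mu(\{0,\dots,N\})$ for $i\in\{-1,0,\dots,N-1\}$ (i.e. distributed as $X$ conditioned on $X<N$). Then for every integer $n>N+1$ such that $\mathrm T_n$ is defined and the denominator below is positive, \[ \mathbf P(\Delta_n\le N)\le\frac{\mathbf P\big(X^{<N}_1+\dots+X^{<N}_n=-1\big)}{n\,\mathbf P(X_1=N)\,\mathbf P\big(X^{<N}_2+\dots+X^{<N}_n=-N-1\big)}. \]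
   Context: An offspring distribution is a probability measure $\mu=(\mu_k)_{k\ge0}$ on $\mathbb Z_+$. $\mathrm T_n$ is a $\mu$-Bienaymé (Galton–Watson) tree conditioned to have exactly $n$ vertices (defined when this event has positive probability), and $\Delta(\mathrm t)$ is the maximal number of children of a vertex of the tree $\mathrm t$. *)

theory Defs
  imports "HOL-Probability.Probability"
begin

datatype ptree = Node "ptree list"

fun nverts :: "ptree \<Rightarrow> nat" where
  "nverts (Node ts) = 1 + sum_list (map nverts ts)"

fun maxdeg :: "ptree \<Rightarrow> nat" where
  "maxdeg (Node ts) = foldr max (map maxdeg ts) (length ts)"

text \<open>P(T = t) for a mu-Bienayme tree T: product over vertices of mu(number of children).\<close>
fun gw_weight :: "nat pmf \<Rightarrow> ptree \<Rightarrow> real" where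
  "gw_weight \<mu> (Node ts) = pmf \<mu> (length ts) * prod_list (map (gw_weight \<mu>) ts)"

text \<open>T_n is defined iff P(|T| = n) > 0.\<close>
definition Tn_defined :: "nat pmf \<Rightarrow> nat \<Rightarrow> bool" where
  "Tn_defined \<mu> n \<longleftrightarrow> (\<Sum>t\<in>{t. nverts t = n}. gw_weight \<mu> t) > 0"

text \<open>P(Delta(T_n) \<le> N) = P(Delta(T) \<le> N, |T| = n) / P(|T| = n).\<close>
definition prob_maxdeg_le :: "nat pmf \<Rightarrow> nat \<Rightarrow> nat \<Rightarrow> real" where
  "prob_maxdeg_le \<mu> n N =
     (\<Sum>t\<in>{t. nverts t = n \<and> maxdeg t \<le> N}. gw_weight \<mu> t)
       / (\<Sum>t\<in>{t. nverts t = n}. gw_weight \<mu> t)"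

text \<open>Law of X, where P(X = i) = mu_{i+1}, i \<ge> -1.\<close>
definition step_pmf :: "nat pmf \<Rightarrow> int pmf" where
  "step_pmf \<mu> = map_pmf (\<lambda>k. int k - 1) \<mu>"

fun iid_sum :: "int pmf \<Rightarrow> nat \<Rightarrow> int pmf" where
  "iid_sum p 0 = return_pmf 0"
| "iid_sum p (Suc m) = bind_pmf p (\<lambda>x. map_pmf (\<lambda>s. x + s) (iid_sum p m))"

end

theory Submission
  imports Defs
begin

text \<open>Encode a plane tree with \<open>n\<close> vertices by its Lukasiewicz word, the list of child counts
  in preorder. This is a bijection onto the words of length \<open>n\<close> whose walk \<open>\<Sum>(x\<^sub>i - 1)\<close> stays
  nonnegative until it reaches \<open>-1\<close> at the end, and the Bienayme weight of the tree is the
  product of the \<open>\<mu>(x\<^sub>i)\<close>. By the cycle lemma, exactly one of the \<open>n\<close> rotations of a word of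
  length \<open>n\<close> and sum \<open>n - 1\<close> is a tree code. Hence \<open>n P(|T| = n, \<Delta> \<le> N)\<close> is the weight of all
  words with letters \<open>\<le> N\<close> and sum \<open>n - 1\<close>, which is \<open>\<mu>{0..N}^n P(X\<^sub>1 + \<dots> + X\<^sub>n = -1)\<close> for the
  truncated steps. For the denominator, the words made of a letter \<open>N + 1\<close> followed by \<open>n - 1\<close>
  letters \<open>\<le> N\<close> of sum \<open>n - N - 2\<close> have \<open>n\<close> pairwise distinct rotations, which gives
  \<open>P(|T| = n) \<ge> \<mu>(N + 1) \<mu>{0..N}^(n - 1) P(X\<^sub>2 + \<dots> + X\<^sub>n = -N - 1)\<close>. Dividing and using
  \<open>\<mu>{0..N} \<le> 1\<close> gives the bound.\<close>

section \<open>Lukasiewicz words of plane forests\<close>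

function degree_sequence :: "ptree list \<Rightarrow> nat list" where
  "degree_sequence [] = []"
| "degree_sequence (Node cs # ts) = length cs # degree_sequence (cs @ ts)"
  by pat_completeness auto
termination by (relation "Wellfounded.measure (\<lambda>ts. sum_list (map nverts ts))") auto

text \<open>\<open>forest_code k xs\<close>: \<open>xs\<close> is the Lukasiewicz word (preorder degree sequence) of a forest
  of \<open>k\<close> trees; \<open>k\<close> counts the subtrees that remain to be read.\<close>
fun forest_code :: "nat \<Rightarrow> nat list \<Rightarrow> bool" where
  "forest_code 0 xs \<longleftrightarrow> xs = []"
| "forest_code (Suc k) [] \<longleftrightarrow> False"
| "forest_code (Suc k) (d # xs) \<longleftrightarrow> forest_code (k + d) xs"

fun forest_of_code :: "nat \<Rightarrow> nat list \<Rightarrow> ptree list" where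
  "forest_of_code 0 xs = []"
| "forest_of_code (Suc k) [] = []"
| "forest_of_code (Suc k) (d # xs) =
     (let ts = forest_of_code (k + d) xs in Node (take d ts) # drop d ts)"

lemma forest_code_degree_sequence: "forest_code (length ts) (degree_sequence ts)"
  by (induction ts rule: degree_sequence.induct) (auto simp: add.commute)

lemma forest_of_code_degree_sequence: "forest_of_code (length ts) (degree_sequence ts) = ts"
  by (induction ts rule: degree_sequence.induct) (auto simp: add.commute Let_def)

lemma degree_sequence_forest_of_code:
  "forest_code k xs \<Longrightarrow> length (forest_of_code k xs) = k \<and> degree_sequence (forest_of_code k xs) = xs"
  by (induction k xs rule: forest_of_code.induct) (auto simp: Let_def min_def)

lemma length_degree_sequence: "length (degree_sequence ts) = sum_list (map nverts ts)"
  by (induction ts rule: degree_sequence.induct) auto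

definition word_weight :: "nat pmf \<Rightarrow> nat list \<Rightarrow> real" where
  "word_weight \<mu> xs = (\<Prod>x\<leftarrow>xs. pmf \<mu> x)"

lemma word_weight_nonneg: "word_weight \<mu> xs \<ge> 0"
  unfolding word_weight_def by (induction xs) auto

lemma word_weight_degree_sequence:
  "word_weight \<mu> (degree_sequence ts) = (\<Prod>t\<leftarrow>ts. gw_weight \<mu> t)"
  unfolding word_weight_def by (induction ts rule: degree_sequence.induct) (auto simp: mult.assoc)

lemma maxdeg_le_iff: "maxdeg (Node ts) \<le> N \<longleftrightarrow> length ts \<le> N \<and> (\<forall>t\<in>set ts. maxdeg t \<le> N)"
proof -
  have "foldr max xs a \<le> N \<longleftrightarrow> a \<le> N \<and> (\<forall>x\<in>set xs. x \<le> N)" for xs and a :: nat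
    by (induction xs) auto
  then show ?thesis by simp
qed

lemma degree_sequence_le_iff:
  "(\<forall>x\<in>set (degree_sequence ts). x \<le> N) \<longleftrightarrow> (\<forall>t\<in>set ts. maxdeg t \<le> N)"
  by (induction ts rule: degree_sequence.induct) (auto simp: maxdeg_le_iff simp del: maxdeg.simps)

lemma bij_betw_degree_sequence:
  "bij_betw (\<lambda>t. degree_sequence [t])
     {t. nverts t = n \<and> P (degree_sequence [t])} {xs. forest_code 1 xs \<and> length xs = n \<and> P xs}"
proof (rule bij_betw_byWitness[where f' = "\<lambda>xs. hd (forest_of_code 1 xs)"])
  have single: "\<exists>t. forest_of_code 1 xs = [t] \<and> degree_sequence [t] = xs" if "forest_code 1 xs" for xs
    using degree_sequence_forest_of_code[OF that] by (metis One_nat_def length_0_conv length_Suc_conv)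
  show "\<forall>t\<in>{t. nverts t = n \<and> P (degree_sequence [t])}. hd (forest_of_code 1 (degree_sequence [t])) = t"
    using forest_of_code_degree_sequence[of "[_]"] by simp
  show "\<forall>xs\<in>{xs. forest_code 1 xs \<and> length xs = n \<and> P xs}. degree_sequence [hd (forest_of_code 1 xs)] = xs"
    using single by force
  show "(\<lambda>t. degree_sequence [t]) ` {t. nverts t = n \<and> P (degree_sequence [t])}
          \<subseteq> {xs. forest_code 1 xs \<and> length xs = n \<and> P xs}"
    using forest_code_degree_sequence[of "[_]"] length_degree_sequence[of "[_]"] by auto
  show "(\<lambda>xs. hd (forest_of_code 1 xs)) ` {xs. forest_code 1 xs \<and> length xs = n \<and> P xs}
          \<subseteq> {t. nverts t = n \<and> P (degree_sequence [t])}"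
    using single length_degree_sequence[of "[_]"] by fastforce
qed

definition walk :: "nat list \<Rightarrow> nat \<Rightarrow> int" where
  "walk xs j = (\<Sum>x\<leftarrow>take j xs. int x - 1)"

lemma walk_length: "walk xs (length xs) = int (sum_list xs) - int (length xs)"
  by (induction xs) (auto simp: walk_def)

lemma forest_code_iff_walk:
  "forest_code k xs \<longleftrightarrow> walk xs (length xs) = - int k \<and> (\<forall>j<length xs. - int k < walk xs j)"
proof (induction xs arbitrary: k)
  case Nil
  then show ?case by (cases k) (auto simp: walk_def)
next
  case (Cons d xs)
  have walk_Cons: "walk (d # xs) (Suc j) = int d - 1 + walk xs j" for j
    by (simp add: walk_def)
  show ?case
  proof (cases k)
    case 0
    then show ?thesis by (auto simp: walk_def All_less_Suc2)
  next
    case (Suc k')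
    then show ?thesis
      using Cons.IH[of "k' + d"]
      by (auto simp: All_less_Suc2 walk_Cons walk_def[of _ 0] algebra_simps; smt (verit))
  qed
qed

lemma forest_code_sum_list: "forest_code 1 xs \<Longrightarrow> sum_list xs + 1 = length xs"
  using forest_code_iff_walk[of 1 xs] walk_length[of xs] by simp

section \<open>The cycle lemma\<close>

lemma inj_rotate: "inj (rotate k)"
proof (induction k)
  case (Suc k)
  have "rotate (Suc k) = rotate1 \<circ> rotate k" by auto
  then show ?case using inj_compose[OF inj_rotate1 Suc.IH] by (simp add: comp_def)
qed simp

lemma sum_list_rotate: "sum_list (rotate k xs) = sum_list (xs :: 'a::comm_monoid_add list)"
proof -
  have "sum_list xs = sum_list (take (k mod length xs) xs @ drop (k mod length xs) xs)" by simp
  then show ?thesis by (simp only: rotate_drop_take sum_list_append add.commute)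
qed

lemma prod_list_rotate: "prod_list (rotate k xs) = prod_list (xs :: 'a::comm_monoid_mult list)"
proof -
  have "prod_list xs = prod_list (take (k mod length xs) xs @ drop (k mod length xs) xs)" by simp
  then show ?thesis by (simp only: rotate_drop_take prod_list.append mult.commute)
qed

lemma rotate_Cons_eq_rotate_Cons:
  assumes eq: "rotate k (c # xs) = rotate j (c # ys)" and "c \<notin> set xs" "c \<notin> set ys"
    and "k \<le> length xs" "j \<le> length ys"
  shows "k = j \<and> xs = ys"
proof -
  have ordered: "k = j \<and> xs = ys" if eq: "rotate k (c # xs) = rotate j (c # ys)" and "k \<le> j"
    and "j \<le> length ys" and "c \<notin> set ys" for k j xs ys
  proof -
    have "rotate k (c # xs) = rotate k (rotate (j - k) (c # ys))"
      using eq \<open>k \<le> j\<close> by (simp add: rotate_rotate)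
    then have rot: "c # xs = rotate (j - k) (c # ys)"
      using inj_rotate by (metis injD)
    have "j - k = 0"
    proof (rule ccontr)
      assume "j - k \<noteq> 0"
      then obtain m where m: "j - k = Suc m" by (metis not0_implies_Suc)
      have m_less: "m < length ys" using m \<open>j \<le> length ys\<close> by linarith
      have "c = rotate (j - k) (c # ys) ! 0" using rot by (metis nth_Cons_0)
      also have "\<dots> = ys ! m" using m m_less by (simp add: nth_rotate del: rotate_Suc)
      finally show False using m_less \<open>c \<notin> set ys\<close> by (simp add: nth_mem)
    qed
    then show ?thesis using rot \<open>k \<le> j\<close> by simp
  qed
  show ?thesis
  proof (cases "k \<le> j")
    case True
    then show ?thesis using ordered[of k xs j ys] assms by blast
  next
    case False
    then show ?thesis using ordered[of j ys k xs] assms by fastforce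
  qed
qed

lemma walk_rotate:
  assumes "k < length xs" "j \<le> length xs"
  shows "walk (rotate k xs) j =
    (if k + j < length xs then walk xs (k + j) - walk xs k
     else walk xs (k + j - length xs) + walk xs (length xs) - walk xs k)"
proof -
  have rot: "rotate k xs = drop k xs @ take k xs"
    using assms by (simp add: rotate_drop_take)
  have split: "walk xs (length xs) = walk xs k + (\<Sum>x\<leftarrow>drop k xs. int x - 1)"
    unfolding walk_def by (metis append_take_drop_id map_append sum_list_append take_all order_refl)
  show ?thesis
  proof (cases "k + j < length xs")
    case True
    then have "take (k + j) xs = take k xs @ take j (drop k xs)" by (simp add: take_add)
    then show ?thesis using True rot by (simp add: walk_def)
  next
    case False
    then have "take j (rotate k xs) = drop k xs @ take (k + j - length xs) xs"
      using assms rot by (simp add: min_def add.commute)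
    then have "walk (rotate k xs) j = (\<Sum>x\<leftarrow>drop k xs. int x - 1) + walk xs (k + j - length xs)"
      by (simp only: walk_def map_append sum_list_append)
    then show ?thesis using False split by simp
  qed
qed

lemma forest_code_rotate_iff:
  assumes sum: "sum_list xs + 1 = length xs" and k: "k < length xs"
  shows "forest_code 1 (rotate k xs) \<longleftrightarrow>
    (\<forall>i<k. walk xs k < walk xs i) \<and> (\<forall>i\<in>{k..<length xs}. walk xs k \<le> walk xs i)"
proof -
  let ?n = "length xs"
  have walk_end: "walk xs ?n = -1" using sum walk_length[of xs] by simp
  have "walk (rotate k xs) (length (rotate k xs)) = -1"
    using sum walk_length[of "rotate k xs"] by (simp add: sum_list_rotate)
  then have "forest_code 1 (rotate k xs) \<longleftrightarrow> (\<forall>j<?n. 0 \<le> walk (rotate k xs) j)"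
    by (auto simp: forest_code_iff_walk)
  also have "\<dots> \<longleftrightarrow> (\<forall>i<k. walk xs k < walk xs i) \<and> (\<forall>i\<in>{k..<?n}. walk xs k \<le> walk xs i)"
  proof safe
    fix i assume "\<forall>j<?n. 0 \<le> walk (rotate k xs) j"
    then have rotated: "0 \<le> walk (rotate k xs) j" if "j < ?n" for j using that by blast
    show "walk xs k < walk xs i" if "i < k"
    proof -
      have j: "?n - k + i < ?n" "\<not> k + (?n - k + i) < ?n" "k + (?n - k + i) - ?n = i"
        using that k by auto
      have "walk (rotate k xs) (?n - k + i) = walk xs i + walk xs ?n - walk xs k"
        using walk_rotate[OF k less_imp_le[OF j(1)]] j(2,3) by (simp only: if_False)
      then show ?thesis using rotated[OF j(1)] walk_end by linarith
    qed
    show "walk xs k \<le> walk xs i" if "i \<in> {k..<?n}"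
      using rotated[of "i - k"] walk_rotate[OF k, of "i - k"] that by (simp add: less_imp_diff_less)
  next
    fix j assume wk': "\<forall>i<k. walk xs k < walk xs i" and wk: "\<forall>i\<in>{k..<?n}. walk xs k \<le> walk xs i"
      and "j < ?n"
    then show "0 \<le> walk (rotate k xs) j"
    proof (cases "k + j < ?n")
      case True
      then have "walk xs k \<le> walk xs (k + j)" using wk by simp
      moreover have "walk (rotate k xs) j = walk xs (k + j) - walk xs k"
        using walk_rotate[OF k less_imp_le[OF \<open>j < ?n\<close>]] True by (simp only: if_True)
      ultimately show ?thesis by linarith
    next
      case False
      then have "k + j - ?n < k" using \<open>j < ?n\<close> by linarith
      then have "walk xs k < walk xs (k + j - ?n)" using wk' by simp
      moreover have "walk (rotate k xs) j = walk xs (k + j - ?n) + walk xs ?n - walk xs k"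
        using walk_rotate[OF k less_imp_le[OF \<open>j < ?n\<close>]] False by (simp only: if_False)
      ultimately show ?thesis using walk_end by linarith
    qed
  qed
  finally show ?thesis .
qed

lemma ex1_first_argmin:
  fixes G :: "nat \<Rightarrow> 'a::linorder"
  assumes "n > 0"
  shows "\<exists>!k. k < n \<and> (\<forall>i<k. G k < G i) \<and> (\<forall>i\<in>{k..<n}. G k \<le> G i)"
proof -
  define m where "m = Min (G ` {..<n})"
  have "m \<in> G ` {..<n}" unfolding m_def using assms by (intro Min_in) auto
  then have ex: "\<exists>k. k < n \<and> G k = m" by auto
  define k where "k = (LEAST k. k < n \<and> G k = m)"
  have k: "k < n" "G k = m" using LeastI_ex[OF ex] unfolding k_def by auto
  have min: "m \<le> G i" if "i < n" for i unfolding m_def using that by simp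
  have first: "G k < G i" if "i < k" for i
    using not_less_Least[of i "\<lambda>k. k < n \<and> G k = m"] that k min[of i] unfolding k_def by fastforce
  show ?thesis
  proof (rule ex1I[of _ k])
    show "k < n \<and> (\<forall>i<k. G k < G i) \<and> (\<forall>i\<in>{k..<n}. G k \<le> G i)"
      using k first min by auto
    fix k' assume h: "k' < n \<and> (\<forall>i<k'. G k' < G i) \<and> (\<forall>i\<in>{k'..<n}. G k' \<le> G i)"
    then show "k' = k"
    proof (cases k' k rule: linorder_cases)
      case less
      then have "G k' \<le> G k" using h k(1) by simp
      then show ?thesis using first[OF less] by simp
    next
      case greater
      then have "G k' < G k" using h by simp
      then show ?thesis using k min[of k'] h by simp
    qed
  qed
qed

theorem cycle_lemma:
  assumes "sum_list xs + 1 = length xs"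
  shows "\<exists>!k. k < length xs \<and> forest_code 1 (rotate k xs)"
proof -
  have "k < length xs \<and> forest_code 1 (rotate k xs) \<longleftrightarrow>
    k < length xs \<and> (\<forall>i<k. walk xs k < walk xs i) \<and> (\<forall>i\<in>{k..<length xs}. walk xs k \<le> walk xs i)" for k
    using forest_code_rotate_iff[OF assms] by blast
  moreover have "length xs > 0" using assms by linarith
  ultimately show ?thesis using ex1_first_argmin[of "length xs" "walk xs"] by simp
qed

section \<open>The truncated random walk\<close>

lemma pmf_step_pmf: "pmf (step_pmf \<mu>) (int k - 1) = pmf \<mu> k"
  unfolding step_pmf_def by (rule pmf_map_inj') (auto simp: inj_def)

lemma pmf_iid_sum_map_pmf:
  fixes \<nu> :: "nat pmf"
  assumes A: "finite A" "set_pmf \<nu> \<subseteq> A"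
  shows "pmf (iid_sum (map_pmf (\<lambda>k. int k - 1) \<nu>) m) s =
    (\<Sum>xs\<in>{xs. set xs \<subseteq> A \<and> length xs = m}.
       if int (sum_list xs) - int m = s then word_weight \<nu> xs else 0)"
proof (induction m arbitrary: s)
  case 0
  have "{xs. set xs \<subseteq> A \<and> length xs = 0} = {[]}" by auto
  then show ?case by (simp add: indicator_def word_weight_def)
next
  case (Suc m)
  let ?X = "map_pmf (\<lambda>k. int k - 1) \<nu>"
  let ?L = "\<lambda>m. {xs. set xs \<subseteq> A \<and> length xs = m}"
  let ?f = "\<lambda>xs. if int (sum_list xs) - int (Suc m) = s then word_weight \<nu> xs else 0"
  have "pmf (map_pmf ((+) x) (iid_sum ?X m)) s = pmf (iid_sum ?X m) (s - x)" for x
    using pmf_map_inj'[of "(+) x" "iid_sum ?X m" "s - x"] by (simp add: inj_def)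
  then have "pmf (iid_sum ?X (Suc m)) s = (\<integral>k. pmf (iid_sum ?X m) (s - int k + 1) \<partial>\<nu>)"
    by (simp add: pmf_bind algebra_simps)
  also have "\<dots> = (\<Sum>k\<in>A. pmf (iid_sum ?X m) (s - int k + 1) * pmf \<nu> k)"
    using A by (intro integral_measure_pmf_real) auto
  also have "\<dots> = (\<Sum>k\<in>A. \<Sum>ys\<in>?L m. ?f (k # ys))"
    by (auto simp: Suc.IH sum_distrib_right word_weight_def intro!: sum.cong)
  also have "\<dots> = (\<Sum>(ys, k)\<in>?L m \<times> A. ?f (k # ys))"
    by (subst sum.swap) (simp add: sum.cartesian_product)
  also have "\<dots> = sum ?f (?L (Suc m))"
    unfolding lists_length_Suc_eq by (subst sum.reindex) (auto simp: inj_on_def split_def)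
  finally show ?case .
qed

lemma pmf_iid_sum_cond_step_pmf:
  fixes \<mu> :: "nat pmf" and N :: nat
  defines "p \<equiv> measure_pmf.prob \<mu> {0..N}"
  assumes p: "p > 0"
  shows "p ^ m * pmf (iid_sum (cond_pmf (step_pmf \<mu>) {i. i < int N}) m) s =
    (\<Sum>xs | set xs \<subseteq> {..N} \<and> length xs = m \<and> int (sum_list xs) - int m = s. word_weight \<mu> xs)"
proof -
  let ?L = "{xs. set xs \<subseteq> {..N} \<and> length xs = m}"
  have preimage: "(\<lambda>k. int k - 1) -` {i. i < int N} = {..N}" by auto
  have ne: "set_pmf \<mu> \<inter> {..N} \<noteq> {}"
    using p measure_pmf_zero_iff[of \<mu> "{..N}"] unfolding p_def by (auto simp: atLeast0AtMost)
  have cond: "cond_pmf (step_pmf \<mu>) {i. i < int N} = map_pmf (\<lambda>k. int k - 1) (cond_pmf \<mu> {..N})"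
    unfolding step_pmf_def
    by (rule cond_map_pmf[where f = "\<lambda>k. int k - 1" and s = "{i. i < int N}", unfolded preimage, OF ne])
  have "word_weight (cond_pmf \<mu> {..N}) xs = word_weight \<mu> xs / p ^ m" if "xs \<in> ?L" for xs
    using that p
    by (induction xs arbitrary: m) (auto simp: word_weight_def pmf_cond[OF ne] p_def atLeast0AtMost)
  then have "pmf (iid_sum (cond_pmf (step_pmf \<mu>) {i. i < int N}) m) s =
      (\<Sum>xs\<in>?L. if int (sum_list xs) - int m = s then word_weight \<mu> xs else 0) / p ^ m"
    unfolding cond
    by (subst pmf_iid_sum_map_pmf[where A = "{..N}"])
      (auto simp: set_cond_pmf[OF ne] sum_divide_distrib intro!: sum.cong)
  also have "(\<Sum>xs\<in>?L. if int (sum_list xs) - int m = s then word_weight \<mu> xs else 0) =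
      (\<Sum>xs | set xs \<subseteq> {..N} \<and> length xs = m \<and> int (sum_list xs) - int m = s. word_weight \<mu> xs)"
  proof -
    have filter: "{xs\<in>?L. int (sum_list xs) - int m = s} =
        {xs. set xs \<subseteq> {..N} \<and> length xs = m \<and> int (sum_list xs) - int m = s}" by auto
    show ?thesis unfolding filter[symmetric] by (rule sum.inter_filter[symmetric]) (simp add: finite_lists_length_eq)
  qed
  finally show ?thesis using p by simp
qed

section \<open>Counting trees by rotating words\<close>

lemma word_weight_rotate: "word_weight \<mu> (rotate k xs) = word_weight \<mu> xs"
  unfolding word_weight_def rotate_map[symmetric] by (rule prod_list_rotate)

lemma sum_gw_weight_eq_sum_codes:
  "(\<Sum>t | nverts t = n \<and> P (degree_sequence [t]). gw_weight \<mu> t) =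
   (\<Sum>xs | forest_code 1 xs \<and> length xs = n \<and> P xs. word_weight \<mu> xs)"
proof -
  have "gw_weight \<mu> t = word_weight \<mu> (degree_sequence [t])" for t
    using word_weight_degree_sequence[of \<mu> "[t]"] by simp
  then show ?thesis
    using sum.reindex_bij_betw[OF bij_betw_degree_sequence, of "word_weight \<mu>"] by simp
qed

lemma finite_forest_codes: "finite {xs. forest_code 1 xs \<and> length xs = n}"
proof (rule finite_subset)
  show "{xs. forest_code 1 xs \<and> length xs = n} \<subseteq> {xs. set xs \<subseteq> {..n} \<and> length xs = n}"
  proof
    fix xs assume xs: "xs \<in> {xs. forest_code 1 xs \<and> length xs = n}"
    have "x \<le> n" if "x \<in> set xs" for x
      using forest_code_sum_list[of xs] member_le_sum_list[OF that] xs by simp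
    then show "xs \<in> {xs. set xs \<subseteq> {..n} \<and> length xs = n}" using xs by auto
  qed
qed (simp add: finite_lists_length_eq)

lemma sum_rotations_forest_code:
  fixes w :: "nat list \<Rightarrow> real"
  assumes "sum_list xs + 1 = length xs" and w: "\<And>k. w (rotate k xs) = w xs"
  shows "(\<Sum>k<length xs. if forest_code 1 (rotate k xs) then w (rotate k xs) else 0) = w xs"
  using cycle_lemma[OF assms(1)]
proof (rule ex1E)
  fix k0 assume k0: "k0 < length xs \<and> forest_code 1 (rotate k0 xs)"
    and unique: "\<forall>k. k < length xs \<and> forest_code 1 (rotate k xs) \<longrightarrow> k = k0"
  have "(if forest_code 1 (rotate k xs) then w (rotate k xs) else 0) = (if k = k0 then w xs else 0)"
    if "k < length xs" for k
  proof (cases "k = k0")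
    case True
    then show ?thesis using k0 w[of k] by simp
  next
    case False
    then have "\<not> forest_code 1 (rotate k xs)" using unique \<open>k < length xs\<close> by blast
    then show ?thesis using False by simp
  qed
  then have "(\<Sum>k<length xs. if forest_code 1 (rotate k xs) then w (rotate k xs) else 0) =
      (\<Sum>k<length xs. if k = k0 then w xs else 0)"
    by simp
  also have "\<dots> = w xs" using k0 by simp
  finally show ?thesis .
qed

lemma sum_rotation_closed:
  fixes w :: "nat list \<Rightarrow> real"
  assumes "finite S"
    and S: "\<And>xs. xs \<in> S \<Longrightarrow> length xs = n \<and> sum_list xs + 1 = n"
    and rotate_S: "\<And>xs k. xs \<in> S \<Longrightarrow> rotate k xs \<in> S"
    and w: "\<And>xs k. w (rotate k xs) = w xs"
  shows "sum w S = real n * sum w {xs\<in>S. forest_code 1 xs}"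
proof -
  define g where "g xs = (if forest_code 1 xs then w xs else 0)" for xs
  have permute: "(\<Sum>xs\<in>S. g (rotate k xs)) = sum g S" for k
  proof -
    have inj: "inj_on (rotate k) S" using inj_rotate by (rule inj_on_subset) simp
    then have "rotate k ` S = S" using endo_inj_surj[OF \<open>finite S\<close>] rotate_S by blast
    then show ?thesis using sum.reindex[OF inj, of g] by simp
  qed
  have "w xs = (\<Sum>k<n. g (rotate k xs))" if "xs \<in> S" for xs
    using sum_rotations_forest_code[of xs w] S[OF that] w unfolding g_def by simp
  then have "sum w S = (\<Sum>xs\<in>S. \<Sum>k<n. g (rotate k xs))" by (rule sum.cong[OF refl])
  also have "\<dots> = (\<Sum>k<n. \<Sum>xs\<in>S. g (rotate k xs))" by (rule sum.swap)
  also have "\<dots> = real n * sum g S" using permute by simp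
  also have "sum g S = sum w {xs\<in>S. forest_code 1 xs}"
    unfolding g_def using \<open>finite S\<close> by (simp add: sum.inter_filter)
  finally show ?thesis .
qed

definition marked_rotations :: "nat \<Rightarrow> 'a \<Rightarrow> 'a list set \<Rightarrow> 'a list set" where
  "marked_rotations n c Y = (\<lambda>(k, ys). rotate k (c # ys)) ` ({..<n} \<times> Y)"

lemma rotate_mem_marked_rotations:
  assumes Y: "\<And>ys. ys \<in> Y \<Longrightarrow> length ys + 1 = n" and xs: "xs \<in> marked_rotations n c Y"
  shows "rotate j xs \<in> marked_rotations n c Y"
proof -
  obtain k ys where k: "k < n" "ys \<in> Y" "xs = rotate k (c # ys)"
    using xs unfolding marked_rotations_def by auto
  have "rotate j xs = rotate ((j + k) mod n) (c # ys)"
    using k Y[OF k(2)] by (simp add: rotate_rotate rotate_conv_mod[of "j + k"])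
  moreover have "(j + k) mod n < n" using k(1) by simp
  ultimately show ?thesis using k(2) unfolding marked_rotations_def by force
qed

lemma sum_marked_rotations:
  fixes w :: "'a list \<Rightarrow> real"
  assumes Y: "\<And>ys. ys \<in> Y \<Longrightarrow> length ys + 1 = n \<and> c \<notin> set ys"
    and w: "\<And>xs k. w (rotate k xs) = w xs"
  shows "sum w (marked_rotations n c Y) = real n * (\<Sum>ys\<in>Y. w (c # ys))"
proof -
  have "inj_on (\<lambda>(k, ys). rotate k (c # ys)) ({..<n} \<times> Y)"
  proof (rule inj_onI, clarsimp)
    fix k ys j zs
    assume "k < n" "ys \<in> Y" "j < n" "zs \<in> Y" "rotate k (c # ys) = rotate j (c # zs)"
    then show "k = j \<and> ys = zs"
      using Y[of ys] Y[of zs] by (intro rotate_Cons_eq_rotate_Cons) auto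
  qed
  then have "sum w (marked_rotations n c Y) = (\<Sum>(k, ys)\<in>{..<n} \<times> Y. w (rotate k (c # ys)))"
    unfolding marked_rotations_def by (simp add: sum.reindex case_prod_unfold)
  also have "\<dots> = real n * (\<Sum>ys\<in>Y. w (c # ys))"
    by (simp add: w sum.cartesian_product[symmetric])
  finally show ?thesis .
qed

lemma sum_gw_weight_maxdeg_le:
  fixes \<mu> :: "nat pmf" and N n :: nat
  defines "p \<equiv> measure_pmf.prob \<mu> {0..N}"
  assumes p: "p > 0"
  shows "real n * (\<Sum>t | nverts t = n \<and> maxdeg t \<le> N. gw_weight \<mu> t) =
    p ^ n * pmf (iid_sum (cond_pmf (step_pmf \<mu>) {i. i < int N}) n) (-1)"
proof -
  let ?w = "word_weight \<mu>"
  define S where "S = {xs. set xs \<subseteq> {..N} \<and> length xs = n \<and> int (sum_list xs) - int n = -1}"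
  have "finite S"
    unfolding S_def by (rule finite_subset[OF _ finite_lists_length_eq[of "{..N}" n]]) auto
  have "{t. nverts t = n \<and> maxdeg t \<le> N} = {t. nverts t = n \<and> (\<forall>x\<in>set (degree_sequence [t]). x \<le> N)}"
    using degree_sequence_le_iff[of "[_]" N] by simp
  moreover have "{xs. forest_code 1 xs \<and> length xs = n \<and> (\<forall>x\<in>set xs. x \<le> N)} = {xs\<in>S. forest_code 1 xs}"
    unfolding S_def using forest_code_sum_list by force
  ultimately have "(\<Sum>t | nverts t = n \<and> maxdeg t \<le> N. gw_weight \<mu> t) = sum ?w {xs\<in>S. forest_code 1 xs}"
    using sum_gw_weight_eq_sum_codes[where P = "\<lambda>xs. \<forall>x\<in>set xs. x \<le> N"] by simp
  also have "real n * \<dots> = sum ?w S"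
    by (rule sum_rotation_closed[OF \<open>finite S\<close>, symmetric]) (auto simp: S_def sum_list_rotate word_weight_rotate)
  also have "\<dots> = p ^ n * pmf (iid_sum (cond_pmf (step_pmf \<mu>) {i. i < int N}) n) (-1)"
    unfolding S_def p_def by (rule pmf_iid_sum_cond_step_pmf[symmetric]) (use p p_def in simp)
  finally show ?thesis .
qed

lemma sum_gw_weight_ge:
  fixes \<mu> :: "nat pmf" and N n :: nat
  defines "p \<equiv> measure_pmf.prob \<mu> {0..N}"
  assumes p: "p > 0" and n: "n > 0"
  shows "pmf \<mu> (Suc N) * p ^ (n - 1)
      * pmf (iid_sum (cond_pmf (step_pmf \<mu>) {i. i < int N}) (n - 1)) (- int N - 1)
    \<le> (\<Sum>t | nverts t = n. gw_weight \<mu> t)"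
proof -
  let ?w = "word_weight \<mu>"
  define Y where
    "Y = {ys. set ys \<subseteq> {..N} \<and> length ys = n - 1 \<and> int (sum_list ys) - int (n - 1) = - int N - 1}"
  let ?S = "marked_rotations n (Suc N) Y"
  have Y: "length ys + 1 = n" "Suc N \<notin> set ys" "sum_list (Suc N # ys) + 1 = n" if "ys \<in> Y" for ys
    using that n unfolding Y_def by auto
  have "finite Y"
    unfolding Y_def by (rule finite_subset[OF _ finite_lists_length_eq[of "{..N}" "n - 1"]]) auto
  then have "finite ?S" unfolding marked_rotations_def by simp
  have S: "length xs = n \<and> sum_list xs + 1 = n" if "xs \<in> ?S" for xs
    using that Y unfolding marked_rotations_def by (auto simp: sum_list_rotate)
  have marked: "sum ?w ?S = real n * (pmf \<mu> (Suc N) * sum ?w Y)"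
  proof -
    have "sum ?w ?S = real n * (\<Sum>ys\<in>Y. ?w (Suc N # ys))"
      by (rule sum_marked_rotations) (use Y word_weight_rotate in auto)
    moreover have "(\<Sum>ys\<in>Y. ?w (Suc N # ys)) = pmf \<mu> (Suc N) * sum ?w Y"
      unfolding sum_distrib_left by (rule sum.cong) (simp_all add: word_weight_def)
    ultimately show ?thesis by simp
  qed
  have "sum ?w ?S = real n * sum ?w {xs\<in>?S. forest_code 1 xs}"
    by (rule sum_rotation_closed[OF \<open>finite ?S\<close> S
          rotate_mem_marked_rotations[OF Y(1)] word_weight_rotate[of \<mu>]])
  also have "\<dots> \<le> real n * sum ?w {xs. forest_code 1 xs \<and> length xs = n}"
    using S by (intro mult_left_mono sum_mono2[OF finite_forest_codes]) (auto simp: word_weight_nonneg)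
  also have "\<dots> = real n * (\<Sum>t | nverts t = n. gw_weight \<mu> t)"
    using sum_gw_weight_eq_sum_codes[where P = "\<lambda>_. True"] by simp
  finally have "pmf \<mu> (Suc N) * sum ?w Y \<le> (\<Sum>t | nverts t = n. gw_weight \<mu> t)"
    using marked n by simp
  moreover have "p ^ (n - 1) * pmf (iid_sum (cond_pmf (step_pmf \<mu>) {i. i < int N}) (n - 1)) (- int N - 1)
      = sum ?w Y"
    unfolding Y_def p_def by (rule pmf_iid_sum_cond_step_pmf) (use p p_def in simp)
  ultimately show ?thesis by (simp add: mult.assoc)
qed

theorem mainTheorem16:
  fixes \<mu> :: "nat pmf" and N n :: nat
  assumes "measure_pmf.prob \<mu> {0..N} > 0"
    and "n > N + 1"
    and "Tn_defined \<mu> n"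
    and "real n * pmf (step_pmf \<mu>) (int N)
           * pmf (iid_sum (cond_pmf (step_pmf \<mu>) {i. i < int N}) (n - 1)) (- int N - 1) > 0"
  shows "prob_maxdeg_le \<mu> n N
    \<le> pmf (iid_sum (cond_pmf (step_pmf \<mu>) {i. i < int N}) n) (-1)
      / (real n * pmf (step_pmf \<mu>) (int N)
           * pmf (iid_sum (cond_pmf (step_pmf \<mu>) {i. i < int N}) (n - 1)) (- int N - 1))"
proof -
  let ?p = "measure_pmf.prob \<mu> {0..N}"
  define C where "C = pmf (iid_sum (cond_pmf (step_pmf \<mu>) {i. i < int N}) n) (-1)"
  define D where "D = pmf (iid_sum (cond_pmf (step_pmf \<mu>) {i. i < int N}) (n - 1)) (- int N - 1)"
  define m where "m = pmf \<mu> (Suc N)"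
  have n: "n > 0" using assms(2) by simp
  have m: "pmf (step_pmf \<mu>) (int N) = m" using pmf_step_pmf[of \<mu> "Suc N"] by (simp add: m_def)
  have "0 < real n * m * D" using assms(4) unfolding m D_def .
  then have "0 < m * D" using n by (metis mult.assoc of_nat_0_less_iff zero_less_mult_pos)
  then have pos: "0 < m * ?p ^ (n - 1) * D"
    using mult_pos_pos[OF \<open>0 < m * D\<close> zero_less_power[OF assms(1), of "n - 1"]] by (simp add: ac_simps)
  have "real n * (\<Sum>t | nverts t = n \<and> maxdeg t \<le> N. gw_weight \<mu> t) = ?p ^ n * C"
    unfolding C_def by (rule sum_gw_weight_maxdeg_le[OF assms(1)])
  then have A: "(\<Sum>t | nverts t = n \<and> maxdeg t \<le> N. gw_weight \<mu> t) = ?p ^ n * C / real n"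
    using n by (simp add: field_simps)
  have B: "m * ?p ^ (n - 1) * D \<le> (\<Sum>t | nverts t = n. gw_weight \<mu> t)"
    unfolding m_def D_def by (rule sum_gw_weight_ge[OF assms(1) n])
  have "prob_maxdeg_le \<mu> n N \<le> (?p ^ n * C / real n) / (m * ?p ^ (n - 1) * D)"
    unfolding prob_maxdeg_le_def A using B pos assms(1) by (intro divide_left_mono) (auto simp: C_def)
  also have "\<dots> = ?p * (C / (real n * m * D))"
  proof -
    have "?p ^ n = ?p * ?p ^ (n - 1)" using n by (cases n) simp_all
    then show ?thesis using pos \<open>0 < real n * m * D\<close> by (simp add: field_simps)
  qed
  also have "\<dots> \<le> C / (real n * m * D)"
    using \<open>0 < real n * m * D\<close> by (intro mult_left_le_one_le) (auto simp: C_def)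
  finally show ?thesis unfolding m C_def D_def .
qed

end
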